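(* Consider $n$ flows $f_1,\dots,f_n$ sharing a server that performs weighted round robin (WRR) with positive integer weights $w_1,\dots,w_n$. Fix a flow of interest $f_i$. Then for every interval $(s,t]$ that is a backlogged period of $f_i$ and every $j\neq i$, \[ \frac{D_i(s,t)}{w_i l_i^{\min}} \;\geq\; \frac{\big[D_j(s,t)-w_j l_j^{\max}\big]^+}{w_j l_j^{\max}}. \] In other words, WRR is a bandwidth-sharing policy (for flow $f_i$) with weights $\phi_i'=q_i:=w_i l_i^{\min}$, $\phi_j'=q_j:=w_j l_j^{\max}$ for $j\neq i$, and penalty terms $H_{ij}'=w_j l_j^{\max}\,\mathbb{1}_{\{i\neq j\}}$.
   Context: Each flow $f_k$ sends packets whose sizes lie in $[l_k^{\min},l_k^{\max}]$ with $0<l_k^{\min}\le l_k^{\max}$. Each flow has its own FIFO queue at the server. WRR operates in rounds forever; in each round the server visits flows $k=1,\dots,n$ in order, and at the visit of flow $k$ it transmits (non-preemptively, one after another) packets from the head of queue $k$ until either queue $k$ is empty or $w_k$ packets have been sent in that visit; then it moves to the next flow. $D_k(t)$ denotes the cumulative amount of data (e.g. bits) of flow $k$ that has left the server in $[0,t)$, $A_k(t)$ the cumulative arrivals, with $D_k\le A_k$, both nondecreasing; $D_k(s,t):=D_k(t)-D_k(s)$. An interval $(s,t]$ is a backlogged period of $f_i$ if $D_i(\tau)<A_i(\tau)$ for all $\tau\in(s,t]$. $[x]^+:=\max\{x,0\}$. A server has a bandwidth-sharing policy if there exist weights $\phi_k>0$ and numbers $H_{ij}\ge 0$ such that for every backlogged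 period $(s,t]$ of flow $f_i$ and all $j\ne i$: $D_i(s,t)/\phi_i\ge [D_j(s,t)-H_{ij}]^+/\phi_j$. *)

theory Defs
  imports Complex_Main
begin

text \<open>
Model of a WRR server with n flows, indexed 0,...,n-1.
The server performs an infinite sequence of visits v = 0,1,2,...; visit v serves
flow (v mod n) (round v div n).  Visit v occupies the time interval [b v, e v]
and transmits c v packets of flow (v mod n); packet m < c v of visit v has
length len v m and is transmitted during [ps v m, pe v m].  The amount of data of
that packet that has left the server in [0,tau) is out v m tau (nondecreasing,
0 before the transmission starts, len v m once it is finished).
\<close>

definition wrr_D ::
  "nat \<Rightarrow> (nat \<Rightarrow> real) \<Rightarrow> (nat \<Rightarrow> nat) \<Rightarrow> (nat \<Rightarrow> nat \<Rightarrow> real \<Rightarrow> real)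
   \<Rightarrow> nat \<Rightarrow> real \<Rightarrow> real" where
  "wrr_D n b c out k \<tau> =
     (\<Sum>v\<in>{v. b v < \<tau> \<and> v mod n = k}. \<Sum>m<c v. out v m \<tau>)"

definition wrr_server ::
  "nat \<Rightarrow> (nat \<Rightarrow> nat) \<Rightarrow> (nat \<Rightarrow> real) \<Rightarrow> (nat \<Rightarrow> real) \<Rightarrow> (nat \<Rightarrow> real \<Rightarrow> real)
   \<Rightarrow> (nat \<Rightarrow> real) \<Rightarrow> (nat \<Rightarrow> real) \<Rightarrow> (nat \<Rightarrow> nat)
   \<Rightarrow> (nat \<Rightarrow> nat \<Rightarrow> real) \<Rightarrow> (nat \<Rightarrow> nat \<Rightarrow> real) \<Rightarrow> (nat \<Rightarrow> nat \<Rightarrow> real)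
   \<Rightarrow> (nat \<Rightarrow> nat \<Rightarrow> real \<Rightarrow> real) \<Rightarrow> bool" where
  "wrr_server n w lmin lmax A b e c len ps pe out \<longleftrightarrow>
     (\<forall>v. b v \<le> e v \<and> e v \<le> b (Suc v)) \<and>
     (\<forall>\<tau>. finite {v. b v < \<tau>}) \<and>
     (\<forall>v. c v \<le> w (v mod n)) \<and>
     (\<forall>v m. m < c v \<longrightarrow>
        b v \<le> ps v m \<and> ps v m \<le> pe v m \<and> pe v m \<le> e v \<and>
        lmin (v mod n) \<le> len v m \<and> len v m \<le> lmax (v mod n)) \<and>
     (\<forall>v m m'. m < m' \<and> m' < c v \<longrightarrow> pe v m \<le> ps v m') \<and>
     (\<forall>v m. m < c v \<longrightarrow> mono (out v m) \<and>
        (\<forall>\<tau>. \<tau> \<le> ps v m \<longrightarrow> out v m \<tau> = 0) \<and>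
        (\<forall>\<tau>. pe v m \<le> \<tau> \<longrightarrow> out v m \<tau> = len v m)) \<and>
     (\<forall>k<n. mono (A k) \<and> (\<forall>\<tau>. wrr_D n b c out k \<tau> \<le> A k \<tau>)) \<and>
     (\<forall>v. c v < w (v mod n) \<longrightarrow>
        A (v mod n) (e v) \<le> wrr_D n b c out (v mod n) (e v))"

definition backlogged_period ::
  "(real \<Rightarrow> real) \<Rightarrow> (real \<Rightarrow> real) \<Rightarrow> real \<Rightarrow> real \<Rightarrow> bool" where
  "backlogged_period D A s t \<longleftrightarrow> s < t \<and> (\<forall>\<tau>. s < \<tau> \<and> \<tau> \<le> t \<longrightarrow> D \<tau> < A \<tau>)"

end

theory Submission
  imports Defs
begin

text \<open>
Split the output of each flow over (s,t] into the contributions of the individual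
visits.  A visit of flow j serves at most w_j packets, hence at most w_j l_j^max
data, and only visits ending after s and starting before t contribute.  A visit of
the backlogged flow i lying inside (s,t] cannot stop early (that would empty queue i),
so it contributes at least w_i l_i^min.  Since the server visits the flows cyclically,
between two consecutive visits of j there is a visit of i, so the number of
contributing visits of j exceeds the number of full visits of i by at most one.
\<close>

lemma mod_eq_less_imp_add_le:
  fixes u v n :: nat
  assumes "u mod n = v mod n" and "u < v"
  shows "u + n \<le> v"
proof -
  have u: "u = n * (u div n) + v mod n" and v: "v = n * (v div n) + v mod n"
    using div_mult_mod_eq[of u n] div_mult_mod_eq[of v n] assms(1) by (simp_all add: mult.commute)
  then have "u div n \<noteq> v div n" using assms(2) by auto
  moreover have "u div n \<le> v div n" using assms(2) by (simp add: div_le_mono)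
  ultimately have "u div n + 1 \<le> v div n" by simp
  then have "n * (u div n + 1) \<le> n * (v div n)" by (rule mult_le_mono2)
  then have "n * (u div n) + n \<le> n * (v div n)" by (simp add: algebra_simps)
  then show ?thesis using u v by linarith
qed

lemma exists_offset_between_residues:
  fixes i j n :: nat
  assumes "i < n" and "j < n" and "i \<noteq> j"
  obtains d where "0 < d" and "d < n" and "\<And>v. v mod n = j \<Longrightarrow> (v + d) mod n = i"
proof
  define d where "d = (if j < i then i - j else i + n - j)"
  show "0 < d" and "d < n" using assms unfolding d_def by auto
  show "(v + d) mod n = i" if "v mod n = j" for v
  proof -
    have "(v + d) mod n = (j + d) mod n" using that by (metis mod_add_left_eq)
    moreover have "j + d = i \<or> j + d = i + n" using assms unfolding d_def by auto
    ultimately show ?thesis using assms by auto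
  qed
qed

lemma excess_ratio_le:
  fixes x y p q :: real and k :: nat
  assumes "0 < p" and "0 < q" and "x \<le> Suc k * q" and "k * p \<le> y"
  shows "max (x - q) 0 / q \<le> y / p"
proof -
  have "max (x - q) 0 \<le> k * q"
    using assms(2,3) by (simp add: algebra_simps)
  then have "max (x - q) 0 / q \<le> k"
    using assms(2) by (simp add: divide_le_eq)
  also have "\<dots> \<le> y / p" using assms(1,4) by (simp add: le_divide_eq)
  finally show ?thesis .
qed

locale wrr_system =
  fixes n :: nat and w :: "nat \<Rightarrow> nat" and lmin lmax :: "nat \<Rightarrow> real"
    and A :: "nat \<Rightarrow> real \<Rightarrow> real"
    and b e :: "nat \<Rightarrow> real" and c :: "nat \<Rightarrow> nat"
    and len ps pe :: "nat \<Rightarrow> nat \<Rightarrow> real" and out :: "nat \<Rightarrow> nat \<Rightarrow> real \<Rightarrow> real"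
  assumes server: "wrr_server n w lmin lmax A b e c len ps pe out"
begin

abbreviation D :: "nat \<Rightarrow> real \<Rightarrow> real" where
  "D \<equiv> wrr_D n b c out"

lemma begin_le_end: "b v \<le> e v"
  and end_le_next_begin: "e v \<le> b (Suc v)"
  and finite_visits_before: "finite {v. b v < \<tau>}"
  and visit_count_le_weight: "c v \<le> w (v mod n)"
  using server unfolding wrr_server_def by auto

lemma packet_bounds:
  assumes "m < c v"
  shows "b v \<le> ps v m" "pe v m \<le> e v"
    "lmin (v mod n) \<le> len v m" "len v m \<le> lmax (v mod n)"
  using server assms unfolding wrr_server_def by blast+

lemma out_props:
  assumes "m < c v"
  shows "mono (out v m)" "\<tau> \<le> ps v m \<Longrightarrow> out v m \<tau> = 0" "pe v m \<le> \<tau> \<Longrightarrow> out v m \<tau> = len v m"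
  using server assms unfolding wrr_server_def by blast+

lemma short_visit_empties_queue:
  "c v < w (v mod n) \<Longrightarrow> A (v mod n) (e v) \<le> D (v mod n) (e v)"
  using server unfolding wrr_server_def by blast

lemma begin_mono: "mono b"
  using begin_le_end end_le_next_begin by (meson mono_iff_le_Suc order_trans)

lemma end_le_begin: "u < v \<Longrightarrow> e u \<le> b v"
  using end_le_next_begin begin_mono by (meson Suc_leI monoD order_trans)

definition served :: "nat \<Rightarrow> real \<Rightarrow> real" where
  "served v \<tau> = (\<Sum>m<c v. out v m \<tau>)"

lemma served_mono: "mono (served v)"
  unfolding served_def using out_props(1) by (intro monoI sum_mono) (simp add: monoD)

lemma served_before_begin: "\<tau> \<le> b v \<Longrightarrow> served v \<tau> = 0"
  unfolding served_def using packet_bounds(1) out_props(2) by (force intro: sum.neutral)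

lemma served_after_end: "e v \<le> \<tau> \<Longrightarrow> served v \<tau> = (\<Sum>m<c v. len v m)"
  unfolding served_def using packet_bounds(2) out_props(3) by (force intro: sum.cong)

lemma served_nonneg: "0 \<le> served v \<tau>"
proof (cases "\<tau> \<le> b v")
  case False
  then have "served v (b v) \<le> served v \<tau>" using served_mono by (simp add: monoD)
  then show ?thesis by (simp add: served_before_begin)
qed (simp add: served_before_begin)

lemma served_le_weight_lmax:
  assumes "0 \<le> lmax (v mod n)"
  shows "served v \<tau> \<le> w (v mod n) * lmax (v mod n)"
proof -
  have "served v \<tau> \<le> served v (max \<tau> (e v))" using served_mono by (simp add: monoD)
  also have "\<dots> = (\<Sum>m<c v. len v m)" by (simp add: served_after_end)
  also have "\<dots> \<le> c v * lmax (v mod n)"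
    using sum_mono[of "{..<c v}" "len v" "\<lambda>_. lmax (v mod n)"] packet_bounds(4) by simp
  also have "\<dots> \<le> w (v mod n) * lmax (v mod n)"
    using visit_count_le_weight assms by (simp add: mult_right_mono)
  finally show ?thesis .
qed

lemma full_visit_served_ge:
  assumes "c v = w (v mod n)" and "e v \<le> \<tau>"
  shows "w (v mod n) * lmin (v mod n) \<le> served v \<tau>"
  using sum_mono[of "{..<c v}" "\<lambda>_. lmin (v mod n)" "len v"] packet_bounds(3) assms
  by (simp add: served_after_end)

lemma D_diff_eq_sum:
  assumes "s \<le> t"
  shows "D k t - D k s = (\<Sum>v | b v < t \<and> v mod n = k. served v t - served v s)"
proof -
  have D_eq: "D k \<tau> = (\<Sum>v | b v < t \<and> v mod n = k. served v \<tau>)" if "\<tau> \<le> t" for \<tau>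
  proof -
    have "D k \<tau> = (\<Sum>v | b v < \<tau> \<and> v mod n = k. served v \<tau>)"
      by (simp add: wrr_D_def served_def)
    also have "\<dots> = (\<Sum>v | b v < t \<and> v mod n = k. served v \<tau>)"
      using that finite_visits_before[of t]
      by (intro sum.mono_neutral_left) (auto, meson not_less served_before_begin)
    finally show ?thesis .
  qed
  show ?thesis
    using D_eq[of t] D_eq[of s] assms by (simp add: sum_subtractf)
qed

definition overlapping_visits :: "nat \<Rightarrow> real \<Rightarrow> real \<Rightarrow> nat set" where
  "overlapping_visits k s t = {v. b v < t \<and> v mod n = k \<and> s < e v}"

definition inner_visits :: "nat \<Rightarrow> real \<Rightarrow> real \<Rightarrow> nat set" where
  "inner_visits k s t = {v. v mod n = k \<and> s < b v \<and> e v < t}"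

lemma finite_inner_visits: "finite (inner_visits k s t)"
proof (rule finite_subset[OF _ finite_visits_before])
  show "inner_visits k s t \<subseteq> {v. b v < t}"
    using begin_le_end by (auto simp: inner_visits_def intro: le_less_trans)
qed

lemma D_diff_le_overlapping_visits:
  assumes "s \<le> t" and "0 \<le> lmax k"
  shows "D k t - D k s \<le> card (overlapping_visits k s t) * (w k * lmax k)"
proof -
  have "D k t - D k s = (\<Sum>v\<in>overlapping_visits k s t. served v t - served v s)"
    unfolding D_diff_eq_sum[OF assms(1)] overlapping_visits_def
    using finite_visits_before[of t] assms(1)
    by (intro sum.mono_neutral_right) (auto, metis not_less order_trans served_after_end)
  also have "\<dots> \<le> (\<Sum>v\<in>overlapping_visits k s t. w k * lmax k)"
  proof (rule sum_mono)
    fix v assume "v \<in> overlapping_visits k s t"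
    then have "served v t \<le> w k * lmax k"
      using served_le_weight_lmax assms(2) by (auto simp: overlapping_visits_def)
    then show "served v t - served v s \<le> w k * lmax k" using served_nonneg[of v s] by linarith
  qed
  finally show ?thesis by simp
qed

lemma backlogged_inner_visit_full:
  assumes "backlogged_period (D k) (A k) s t" and "v \<in> inner_visits k s t"
  shows "c v = w k"
proof (rule ccontr)
  assume "c v \<noteq> w k"
  with assms(2) visit_count_le_weight have "c v < w (v mod n)" and "v mod n = k"
    by (auto simp: inner_visits_def le_less)
  then have "A k (e v) \<le> D k (e v)" using short_visit_empties_queue by blast
  moreover have "D k (e v) < A k (e v)"
    using assms begin_le_end[of v] unfolding backlogged_period_def inner_visits_def by force
  ultimately show False by simp
qed

lemma inner_visits_le_D_diff:
  assumes "backlogged_period (D k) (A k) s t"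
  shows "card (inner_visits k s t) * (w k * lmin k) \<le> D k t - D k s"
proof -
  have "s \<le> t" using assms by (simp add: backlogged_period_def)
  have "card (inner_visits k s t) * (w k * lmin k) = (\<Sum>v\<in>inner_visits k s t. w k * lmin k)"
    by simp
  also have "\<dots> \<le> (\<Sum>v\<in>inner_visits k s t. served v t - served v s)"
  proof (rule sum_mono)
    fix v assume v: "v \<in> inner_visits k s t"
    then have "v mod n = k" and "s < b v" and "e v < t" by (auto simp: inner_visits_def)
    then have "w k * lmin k \<le> served v t"
      using full_visit_served_ge[of v t] backlogged_inner_visit_full[OF assms v] by simp
    moreover have "served v s = 0" using \<open>s < b v\<close> by (simp add: served_before_begin)
    ultimately show "w k * lmin k \<le> served v t - served v s" by simp
  qed
  also have "\<dots> \<le> (\<Sum>v | b v < t \<and> v mod n = k. served v t - served v s)"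
    using finite_visits_before[of t] served_mono[THEN monoD] begin_le_end \<open>s \<le> t\<close>
    by (intro sum_mono2) (auto simp: inner_visits_def, meson le_less_trans)
  finally show ?thesis using D_diff_eq_sum[OF \<open>s \<le> t\<close>] by simp
qed

lemma card_overlapping_visits_le:
  assumes "i < n" and "j < n" and "i \<noteq> j"
  shows "card (overlapping_visits j s t) \<le> Suc (card (inner_visits i s t))"
proof (cases "overlapping_visits j s t = {}")
  case False
  let ?J = "overlapping_visits j s t"
  have fin_J: "finite ?J"
    using finite_visits_before[of t] by (rule finite_subset[rotated]) (auto simp: overlapping_visits_def)
  define v' where "v' = Max ?J"
  have "v' \<in> ?J" using False fin_J by (simp add: v'_def)
  obtain d where "0 < d" and "d < n" and d_mod: "\<And>v. v mod n = j \<Longrightarrow> (v + d) mod n = i"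
    using exists_offset_between_residues[OF assms] by blast
  have "(\<lambda>v. v + d) ` (?J - {v'}) \<subseteq> inner_visits i s t"
  proof (rule image_subsetI)
    fix v assume "v \<in> ?J - {v'}"
    then have "v \<in> ?J" and "v \<noteq> v'" by simp_all
    then have "v < v'" using fin_J by (simp add: v'_def order.not_eq_order_implies_strict)
    with \<open>v \<in> ?J\<close> \<open>v' \<in> ?J\<close> have "v + n \<le> v'"
      by (intro mod_eq_less_imp_add_le) (auto simp: overlapping_visits_def)
    have "s < b (v + d)"
      using \<open>v \<in> ?J\<close> end_le_begin[of v "v + d"] \<open>0 < d\<close> by (simp add: overlapping_visits_def)
    moreover have "e (v + d) < t"
      using \<open>v' \<in> ?J\<close> end_le_begin[of "v + d" v'] \<open>v + n \<le> v'\<close> \<open>d < n\<close>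
      by (simp add: overlapping_visits_def)
    ultimately show "v + d \<in> inner_visits i s t"
      using \<open>v \<in> ?J\<close> d_mod by (simp add: overlapping_visits_def inner_visits_def)
  qed
  then have "card (?J - {v'}) \<le> card (inner_visits i s t)"
    by (intro card_inj_on_le[OF _ _ finite_inner_visits]) (auto simp: inj_on_def)
  then show ?thesis using \<open>v' \<in> ?J\<close> fin_J by simp
qed simp

end

theorem mainTheorem1:
  fixes n :: nat and w :: "nat \<Rightarrow> nat" and lmin lmax :: "nat \<Rightarrow> real"
    and A :: "nat \<Rightarrow> real \<Rightarrow> real"
    and b e :: "nat \<Rightarrow> real" and c :: "nat \<Rightarrow> nat"
    and len ps pe :: "nat \<Rightarrow> nat \<Rightarrow> real" and out :: "nat \<Rightarrow> nat \<Rightarrow> real \<Rightarrow> real"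
    and i j :: nat and s t :: real
  assumes "1 \<le> n"
    and "\<forall>k<n. 1 \<le> w k"
    and "\<forall>k<n. 0 < lmin k \<and> lmin k \<le> lmax k"
    and "wrr_server n w lmin lmax A b e c len ps pe out"
    and "i < n" and "j < n" and "j \<noteq> i"
    and "backlogged_period (wrr_D n b c out i) (A i) s t"
  shows "(wrr_D n b c out i t - wrr_D n b c out i s) / (real (w i) * lmin i)
         \<ge> max (wrr_D n b c out j t - wrr_D n b c out j s - real (w j) * lmax j) 0
             / (real (w j) * lmax j)"
proof -
  interpret wrr_system n w lmin lmax A b e c len ps pe out by standard fact
  let ?I = "card (inner_visits i s t)"
  have "s \<le> t" using assms(8) by (simp add: backlogged_period_def)
  have "0 < w i" "0 < w j" "0 < lmin i" "0 < lmax j"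
    using assms(2,3,5,6) by (auto intro: less_le_trans)
  then have pos_i: "0 < w i * lmin i" and pos_j: "0 < w j * lmax j" by simp_all
  have "D j t - D j s \<le> card (overlapping_visits j s t) * (w j * lmax j)"
    using D_diff_le_overlapping_visits \<open>s \<le> t\<close> pos_j by (simp add: zero_less_mult_iff)
  also have "\<dots> \<le> real (Suc ?I) * (w j * lmax j)"
    using card_overlapping_visits_le[OF assms(5,6) assms(7)[symmetric]] pos_j
    by (intro mult_right_mono) (simp_all only: of_nat_le_iff less_imp_le)
  finally have "max (D j t - D j s - w j * lmax j) 0 / (w j * lmax j) \<le> (D i t - D i s) / (w i * lmin i)"
    by (rule excess_ratio_le[OF pos_i pos_j _ inner_visits_le_D_diff[OF assms(8)]])
  then show ?thesis by simp
qed

end
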